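(* The Lie algebra $\Lambda(\mathbb{Q}\mathrm{Tree}_2^-)$ is not finitely generated.
   Context: A nonsymmetric operad of sets $\mathcal{C}$ consists of sets $\mathcal{C}((m))$, $m\ge 0$, a unit $1\in\mathcal{C}((1))$, and partial compositions $c\circ_s d\in\mathcal{C}((k+j-1))$ for $c\in\mathcal{C}((k))$, $1\le s\le k$, $d\in\mathcal{C}((j))$, satisfying the usual associativity and unit axioms. Write $\mathbb{Q}\mathcal{C}((m))$ for the free $\mathbb{Q}$-vector space on $\mathcal{C}((m))$. The Lie algebra $\Lambda(\mathbb{Q}\mathcal{C})=\bigoplus_{m\ge0}\mathbb{Q}\mathcal{C}((m))$ has bracket, for $c\in\mathcal{C}((k))$, $d\in\mathcal{C}((j))$, $[c,d]=\sum_{t=1}^{j} d\circ_t c-\sum_{s=1}^{k} c\circ_s d$, extended bilinearly. $\mathrm{Tree}_2((m))$, $m\ge1$, is the set of planar binary rooted trees with one root at the bottom and $m$ leaves at the top labeled $1,\dots,m$ from left to right (each internal vertex has exactly two inputs); equivalently, full parenthesizations of the word $12\cdots m$, e.g. $\mathrm{Tree}_2((1))=\{1\}$ (trivial tree), $\mathrm{Tree}_2((2))=\{(12)\}$, $\mathrm{Tree}_2((3))=\{((12)3),(1(23))\}$. The composition $S\circ_i T$ grafts the root of $T$ onto the $i$-th leaf of $S$. For $c\in\mathrm{Tree}_2((m))$, $m\ge2$, the face $\partial_i c\in\mathrm{Tree}_2((m-1))$ is obtained by erasing the $i$-th leaf (and suppressing the resulting vertex with one input), e.g. $\partial_i((12)3)=\partial_i(1(23))=(12)$.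 The nonsymmetric operad $\mathrm{Tree}_2^-$ has $\mathrm{Tree}_2^-((0))=\{\circ\}$ a singleton, $\mathrm{Tree}_2^-((m))=\mathrm{Tree}_2((m))$ for $m\ge1$, with the grafting compositions and additionally $c\circ_i\circ=\partial_i c$ for $m\ge2$ and $1\circ_1\circ=\circ$. *)

theory Defs
  imports Complex_Main "HOL-Library.Poly_Mapping"
begin

text \<open>Planar binary rooted trees; leaves are numbered 1..m from left to right.\<close>
datatype btree = Leaf | Node btree btree

fun leaves :: "btree \<Rightarrow> nat" where
  "leaves Leaf = 1"
| "leaves (Node l r) = leaves l + leaves r"

fun graft :: "btree \<Rightarrow> nat \<Rightarrow> btree \<Rightarrow> btree" where
  "graft Leaf i u = u"
| "graft (Node l r) i u =
     (if i \<le> leaves l then Node (graft l i u) r else Node l (graft r (i - leaves l) u))"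

text \<open>Face: erase the i-th leaf and suppress the resulting unary vertex.\<close>
fun face :: "nat \<Rightarrow> btree \<Rightarrow> btree" where
  "face i Leaf = Leaf"
| "face i (Node l r) =
     (if i \<le> leaves l
      then (if l = Leaf then r else Node (face i l) r)
      else (if r = Leaf then l else Node l (face (i - leaves l) r)))"

text \<open>Elements of the operad Tree2^-: the arity-0 element Circ, or a tree.\<close>
datatype elem = Circ | T btree

fun arity :: "elem \<Rightarrow> nat" where
  "arity Circ = 0"
| "arity (T t) = leaves t"

text \<open>Partial composition c o_s d (only meaningful for 1 \<le> s \<le> arity c).\<close>
fun comp :: "elem \<Rightarrow> nat \<Rightarrow> elem \<Rightarrow> elem" where
  "comp (T t) s (T u) = T (graft t s u)"
| "comp (T t) s Circ = (if t = Leaf then Circ else T (face s t))"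
| "comp Circ s d = Circ"

text \<open>The Lie algebra \<Lambda>(Q Tree2^-): finitely supported Q-linear combinations of elements.\<close>
type_synonym lam = "elem \<Rightarrow>\<^sub>0 rat"

definition basis :: "elem \<Rightarrow> lam" where
  "basis c = Poly_Mapping.single c 1"

definition br_basis :: "elem \<Rightarrow> elem \<Rightarrow> lam" where
  "br_basis c d = (\<Sum>t = 1..arity d. basis (comp d t c)) - (\<Sum>s = 1..arity c. basis (comp c s d))"

definition bracket :: "lam \<Rightarrow> lam \<Rightarrow> lam" where
  "bracket a b = (\<Sum>c \<in> Poly_Mapping.keys a. \<Sum>d \<in> Poly_Mapping.keys b.
       Poly_Mapping.map (\<lambda>x. (Poly_Mapping.lookup a c * Poly_Mapping.lookup b d) * x) (br_basis c d))"

definition smult :: "rat \<Rightarrow> lam \<Rightarrow> lam" where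
  "smult q a = Poly_Mapping.map (\<lambda>x. q * x) a"

inductive_set lie_gen :: "lam set \<Rightarrow> lam set" for S :: "lam set" where
  gen: "a \<in> S \<Longrightarrow> a \<in> lie_gen S"
| zero: "0 \<in> lie_gen S"
| add: "a \<in> lie_gen S \<Longrightarrow> b \<in> lie_gen S \<Longrightarrow> a + b \<in> lie_gen S"
| scal: "a \<in> lie_gen S \<Longrightarrow> smult q a \<in> lie_gen S"
| brk: "a \<in> lie_gen S \<Longrightarrow> b \<in> lie_gen S \<Longrightarrow> bracket a b \<in> lie_gen S"

definition finitely_generated_lie :: bool where
  "finitely_generated_lie \<longleftrightarrow> (\<exists>S. finite S \<and> lie_gen S = UNIV)"

end

theory Submission
  imports Defs
begin

text \<open>
  Call an element \<open>[t\<^sub>1, [t\<^sub>2, \<dots>, [t\<^sub>k, c]]]\<close> with trees \<open>t\<^sub>i\<close> of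
  \<open>2 \<le> arity t\<^sub>i \<le> N + 1\<close> and a basis element \<open>c\<close> of arity \<open>\<le> N + 1\<close> an \<open>N\<close>-word.
  The bracket is the commutator of the pre-Lie product \<open>x \<star> y = \<Sum>\<^sub>s x \<circ>\<^sub>s y\<close>, so it
  satisfies the Jacobi identity, and with it the span of the \<open>N\<close>-words is closed under
  brackets: bracketing with the trivial tree rescales homogeneous elements, and bracketing
  with the arity-0 element \<open>Circ\<close> produces sums of faces, which only lower arities. Hence any finite set of
  generators, all of arity \<open>\<le> N + 1\<close>, generates only the span of the \<open>N\<close>-words.
  The left comb with \<open>N + 2\<close> leaves is not in that span: it is too big to be a generator,
  and its coefficient in \<open>[t, w]\<close> for trees \<open>t, w\<close> with at least two leaves vanishes,
  because the comb is \<open>t \<circ>\<^sub>s w\<close> only for \<open>s = 1\<close> and only when it is also \<open>w \<circ>\<^sub>1 t\<close>.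
\<close>

section \<open>Grafting and faces of planar binary trees\<close>

lemma leaves_ge_1: "1 \<le> leaves t"
  by (induction t) auto

lemma leaves_eq_1_iff: "leaves t = 1 \<longleftrightarrow> t = Leaf"
proof (cases t)
  case (Node l r)
  then show ?thesis using leaves_ge_1[of l] leaves_ge_1[of r] by simp
qed simp

lemma leaves_ge_2_iff: "2 \<le> leaves t \<longleftrightarrow> t \<noteq> Leaf"
  using leaves_eq_1_iff[of t] leaves_ge_1[of t] by linarith

lemma leaves_eq_2D: "leaves t = 2 \<Longrightarrow> t = Node Leaf Leaf"
proof (cases t)
  case (Node l r)
  assume "leaves t = 2"
  then have "leaves l = 1" "leaves r = 1" using Node leaves_ge_1[of l] leaves_ge_1[of r] by auto
  then show ?thesis using Node leaves_eq_1_iff by auto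
qed simp

lemma leaves_graft: "leaves (graft x i y) = leaves x + leaves y - 1"
proof (induction x arbitrary: i)
  case (Node l r)
  then show ?case using leaves_ge_1[of l] leaves_ge_1[of r] leaves_ge_1[of y] by auto
qed simp

lemma leaves_face: "x \<noteq> Leaf \<Longrightarrow> leaves (face i x) = leaves x - 1"
proof (induction x arbitrary: i)
  case (Node l r)
  then show ?case using leaves_ge_1[of l] leaves_ge_1[of r] by auto
qed simp

lemma graft_Leaf_right: "graft x i Leaf = x"
  by (induction x arbitrary: i) auto

lemma graft_eq_Leaf_iff: "graft x i y = Leaf \<longleftrightarrow> x = Leaf \<and> y = Leaf"
  by (cases x) auto

lemma graft_graft_nested:
  "1 \<le> s \<Longrightarrow> s \<le> leaves x \<Longrightarrow> 1 \<le> t \<Longrightarrow> t \<le> leaves y \<Longrightarrow>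
   graft (graft x s y) (s + t - 1) z = graft x s (graft y t z)"
proof (induction x arbitrary: s)
  case (Node l r)
  then show ?case
    by (cases "s \<le> leaves l")
      (auto simp: leaves_graft Node.IH(2)[of "s - leaves l", symmetric] Suc_diff_le)
qed simp

lemma graft_graft_parallel:
  "1 \<le> u \<Longrightarrow> u < s \<Longrightarrow> s \<le> leaves x \<Longrightarrow>
   graft (graft x s y) u z = graft (graft x u z) (s + leaves z - 1) y"
proof (induction x arbitrary: s u)
  case (Node l r)
  note y = leaves_ge_1[of y] and z = leaves_ge_1[of z]
  consider "s \<le> leaves l" | "u \<le> leaves l" "leaves l < s" | "leaves l < u" by linarith
  then show ?case
  proof cases
    case 1
    have "u \<le> leaves (graft l s y)" "s + leaves z - 1 \<le> leaves (graft l u z)"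
      using 1 Node.prems y z by (simp_all add: leaves_graft)
    then show ?thesis using 1 Node by simp
  next
    case 2
    have "\<not> s + leaves z - 1 \<le> leaves (graft l u z)"
      "s + leaves z - 1 - leaves (graft l u z) = s - leaves l"
      using 2 z by (simp_all add: leaves_graft)
    then show ?thesis using 2 by simp
  next
    case 3
    have "s + leaves z - 1 - leaves l = (s - leaves l) + leaves z - 1" "\<not> s + leaves z - 1 \<le> leaves l"
      using 3 Node.prems z by simp_all
    then show ?thesis using 3 Node.prems Node.IH(2)[of "u - leaves l" "s - leaves l"] by simp
  qed
qed simp

lemma face_graft_nested:
  "y \<noteq> Leaf \<Longrightarrow> 1 \<le> s \<Longrightarrow> s \<le> leaves x \<Longrightarrow> 1 \<le> t \<Longrightarrow> t \<le> leaves y \<Longrightarrow>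
   face (s + t - 1) (graft x s y) = graft x s (face t y)"
proof (induction x arbitrary: s)
  case (Node l r)
  show ?case
  proof (cases "s \<le> leaves l")
    case True
    have "s + t - 1 \<le> leaves (graft l s y)" using True Node.prems by (simp add: leaves_graft)
    then show ?thesis using True Node by (simp add: graft_eq_Leaf_iff)
  next
    case False
    have "s + t - 1 - leaves l = (s - leaves l) + t - 1" "\<not> s + t - 1 \<le> leaves l"
      using False Node.prems by simp_all
    then show ?thesis
      using False Node.prems Node.IH(2)[of "s - leaves l"] by (simp add: graft_eq_Leaf_iff)
  qed
qed simp

lemma graft_face_parallel:
  "x \<noteq> Leaf \<Longrightarrow> 1 \<le> u \<Longrightarrow> u < s \<Longrightarrow> s \<le> leaves x \<Longrightarrow>
   graft (face s x) u z = face (s + leaves z - 1) (graft x u z)"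
proof (induction x arbitrary: s u)
  case (Node l r)
  note z = leaves_ge_1[of z]
  consider "s \<le> leaves l" | "u \<le> leaves l" "leaves l < s" | "leaves l < u" by linarith
  then show ?case
  proof cases
    case 1
    have l: "l \<noteq> Leaf" using 1 Node.prems by auto
    have "graft (face s l) u z = face (s + leaves z - 1) (graft l u z)"
      using 1 Node.prems l by (intro Node.IH(1)) simp_all
    moreover have "u \<le> leaves l" "u \<le> leaves (face s l)" "s + leaves z - 1 \<le> leaves (graft l u z)"
      using 1 Node.prems l z by (simp_all add: leaves_face leaves_graft)
    ultimately show ?thesis using 1 l by (simp add: graft_eq_Leaf_iff)
  next
    case 2
    have "\<not> s + leaves z - 1 \<le> leaves (graft l u z)"
      "s + leaves z - 1 - leaves (graft l u z) = s - leaves l"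
      using 2 z by (simp_all add: leaves_graft)
    then show ?thesis using 2 by (cases "r = Leaf") simp_all
  next
    case 3
    have r: "r \<noteq> Leaf" using 3 Node.prems by auto
    have "s + leaves z - 1 - leaves l = (s - leaves l) + leaves z - 1" using 3 Node.prems z by simp
    then have IH: "graft (face (s - leaves l) r) (u - leaves l) z
        = face (s + leaves z - 1 - leaves l) (graft r (u - leaves l) z)"
      using 3 Node.prems r by (simp only:) (intro Node.IH(2); simp)
    have "\<not> s \<le> leaves l" "\<not> s + leaves z - 1 \<le> leaves l" "\<not> u \<le> leaves l"
      "graft r (u - leaves l) z \<noteq> Leaf"
      using 3 Node.prems r z by (simp_all add: graft_eq_Leaf_iff)
    then show ?thesis using 3 r IH by simp
  qed
qed simp

lemma face_graft_parallel:
  "1 \<le> u \<Longrightarrow> u < s \<Longrightarrow> s \<le> leaves x \<Longrightarrow>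
   face u (graft x s y) = graft (face u x) (s - 1) y"
proof (induction x arbitrary: s u)
  case (Node l r)
  consider "s \<le> leaves l" | "u \<le> leaves l" "leaves l < s" | "leaves l < u" by linarith
  then show ?case
  proof cases
    case 1
    have l: "l \<noteq> Leaf" using 1 Node.prems by auto
    have "u \<le> leaves (graft l s y)" "s - 1 \<le> leaves (face u l)"
      using 1 Node.prems l leaves_ge_1[of y] by (simp_all add: leaves_face leaves_graft)
    then show ?thesis using 1 Node l by (simp add: graft_eq_Leaf_iff)
  next
    case 2
    show ?thesis
    proof (cases "l = Leaf")
      case False
      have "\<not> s - 1 \<le> leaves (face u l)" "s - 1 - leaves (face u l) = s - leaves l"
        using 2 False leaves_ge_1[of l] by (simp_all add: leaves_face)
      then show ?thesis using 2 False by simp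
    qed (use 2 Node.prems in simp)
  next
    case 3
    have r: "r \<noteq> Leaf" using 3 Node.prems by auto
    have "\<not> s - 1 \<le> leaves l" "s - 1 - leaves l = s - leaves l - 1"
      using 3 Node.prems by simp_all
    then show ?thesis
      using 3 Node.prems Node.IH(2)[of "u - leaves l" "s - leaves l"] r by (simp add: graft_eq_Leaf_iff)
  qed
qed simp

lemma face_face:
  "3 \<le> leaves x \<Longrightarrow> 1 \<le> u \<Longrightarrow> u < s \<Longrightarrow> s \<le> leaves x \<Longrightarrow>
   face u (face s x) = face (s - 1) (face u x)"
proof (induction x arbitrary: s u)
  case (Node l r)
  consider "s \<le> leaves l" | "u \<le> leaves l" "leaves l < s" | "leaves l < u" by linarith
  then show ?case
  proof cases
    case 1
    show ?thesis
    proof (cases "leaves l = 2")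
      case True
      then have "l = Node Leaf Leaf" by (rule leaves_eq_2D)
      then show ?thesis using 1 Node.prems by (auto simp: numeral_2_eq_2)
    next
      case False
      have l: "3 \<le> leaves l" "l \<noteq> Leaf" using False 1 Node.prems by auto
      have "face s l \<noteq> Leaf" "face u l \<noteq> Leaf"
        using l by (simp_all add: leaves_ge_2_iff[symmetric] leaves_face)
      moreover have "u \<le> leaves (face s l)" "s - 1 \<le> leaves (face u l)"
        using 1 Node.prems l by (simp_all add: leaves_face)
      ultimately show ?thesis using 1 Node l by simp
    qed
  next
    case 2
    show ?thesis
    proof (cases "l = Leaf")
      case True
      then show ?thesis using 2 Node.prems by auto
    next
      case False
      have "\<not> s - 1 \<le> leaves (face u l)" "s - 1 - leaves (face u l) = s - leaves l"
        using 2 False leaves_ge_1[of l] by (simp_all add: leaves_face)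
      then show ?thesis using 2 False by (cases "r = Leaf") simp_all
    qed
  next
    case 3
    have r: "r \<noteq> Leaf" using 3 Node.prems by auto
    show ?thesis
    proof (cases "leaves r = 2")
      case True
      then have "r = Node Leaf Leaf" "s = leaves l + 2" "u = leaves l + 1"
        using 3 Node.prems leaves_eq_2D by auto
      then show ?thesis by simp
    next
      case False
      have r3: "3 \<le> leaves r" using False r leaves_ge_2_iff[of r] by simp
      have "face (s - leaves l) r \<noteq> Leaf" "face (u - leaves l) r \<noteq> Leaf"
        using r3 r by (simp_all add: leaves_ge_2_iff[symmetric] leaves_face)
      moreover have "face (u - leaves l) (face (s - leaves l) r) = face (s - leaves l - 1) (face (u - leaves l) r)"
        using 3 Node.prems r3 by (intro Node.IH(2)) simp_all
      moreover have "\<not> s \<le> leaves l" "\<not> u \<le> leaves l" "\<not> s - 1 \<le> leaves l"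
        "s - 1 - leaves l = s - leaves l - 1"
        using 3 Node.prems by simp_all
      ultimately show ?thesis using r by simp
    qed
  qed
qed simp

section \<open>The operad axioms for \<open>Tree\<^sub>2\<^sup>-\<close>\<close>

lemma arity_comp: "1 \<le> s \<Longrightarrow> s \<le> arity x \<Longrightarrow> arity (comp x s y) = arity x + arity y - 1"
  by (cases x; cases y) (auto simp: leaves_graft leaves_face)

lemma comp_comp_nested:
  assumes "1 \<le> s" "s \<le> arity x" "1 \<le> t" "t \<le> arity y"
  shows "comp (comp x s y) (s + t - 1) z = comp x s (comp y t z)"
proof -
  obtain a b where x: "x = T a" and y: "y = T b" using assms by (cases x; cases y) auto
  show ?thesis
  proof (cases z)
    case (T c)
    then show ?thesis using x y assms graft_graft_nested[of s a t b c] by simp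
  next
    case Circ
    show ?thesis
    proof (cases "b = Leaf")
      case True
      then show ?thesis using assms x y Circ by (simp add: graft_Leaf_right)
    next
      case False
      then show ?thesis using x y Circ assms face_graft_nested[of b s a t] by (simp add: graft_eq_Leaf_iff)
    qed
  qed
qed

lemma comp_comp_parallel:
  assumes "1 \<le> u" "u < s" "s \<le> arity x"
  shows "comp (comp x s y) u z = comp (comp x u z) (s + arity z - 1) y"
proof -
  obtain a where x: "x = T a" and a: "a \<noteq> Leaf"
    using assms by (cases x) (auto simp: leaves_ge_2_iff[symmetric])
  show ?thesis
  proof (cases y; cases z)
    fix b c assume "y = T b" "z = T c"
    then show ?thesis using x assms graft_graft_parallel[of u s a b c] by simp
  next
    fix b assume "y = T b" "z = Circ"
    then show ?thesis using x a assms face_graft_parallel[of u s a b] by (simp add: graft_eq_Leaf_iff)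
  next
    fix c assume "y = Circ" "z = T c"
    then show ?thesis using x a assms graft_face_parallel[of a u s c] by (simp add: graft_eq_Leaf_iff)
  next
    assume yz: "y = Circ" "z = Circ"
    show ?thesis
    proof (cases "leaves a = 2")
      case True
      then have "a = Node Leaf Leaf" by (rule leaves_eq_2D)
      then show ?thesis using x yz assms by (auto simp: numeral_2_eq_2)
    next
      case False
      then have "3 \<le> leaves a" using a leaves_ge_2_iff[of a] by simp
      moreover from this have "face s a \<noteq> Leaf" "face u a \<noteq> Leaf"
        using a by (simp_all add: leaves_ge_2_iff[symmetric] leaves_face)
      ultimately show ?thesis using x yz a assms face_face[of a u s] by simp
    qed
  qed
qed

abbreviation coeff :: "lam \<Rightarrow> elem \<Rightarrow> rat" where "coeff \<equiv> Poly_Mapping.lookup"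
abbreviation support :: "lam \<Rightarrow> elem set" where "support \<equiv> Poly_Mapping.keys"

lemma coeff_smult: "coeff (smult q a) k = q * coeff a k"
  unfolding smult_def by (simp add: Poly_Mapping.map.rep_eq when_def)

lemma coeff_basis: "coeff (basis c) k = (if c = k then 1 else 0)"
  unfolding basis_def by (simp add: lookup_single when_def)

lemma smult_add_right: "smult q (a + b) = smult q a + smult q b"
  by (rule poly_mapping_eqI) (simp add: coeff_smult lookup_add algebra_simps)

lemma smult_add_left: "smult (p + q) a = smult p a + smult q a"
  by (rule poly_mapping_eqI) (simp add: coeff_smult lookup_add algebra_simps)

lemma smult_diff_right: "smult q (a - b) = smult q a - smult q b"
  by (rule poly_mapping_eqI) (simp add: coeff_smult lookup_minus algebra_simps)

lemma smult_diff_left: "smult (p - q) a = smult p a - smult q a"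
  by (rule poly_mapping_eqI) (simp add: coeff_smult lookup_minus algebra_simps)

lemma smult_zero_left [simp]: "smult 0 a = 0"
  by (rule poly_mapping_eqI) (simp add: coeff_smult)

lemma smult_one [simp]: "smult 1 a = a"
  by (rule poly_mapping_eqI) (simp add: coeff_smult)

lemma smult_smult: "smult p (smult q a) = smult (p * q) a"
  by (rule poly_mapping_eqI) (simp add: coeff_smult)

lemma smult_minus_one: "smult (- 1) a = - a"
  by (rule poly_mapping_eqI) (simp add: coeff_smult)

lemma smult_sum: "smult q (sum f A) = (\<Sum>x\<in>A. smult q (f x))"
  by (rule poly_mapping_eqI) (simp add: coeff_smult lookup_sum sum_distrib_left)

lemma sum_const_smult: "(\<Sum>x\<in>A. a) = smult (of_nat (card A)) a"
  by (rule poly_mapping_eqI) (simp add: lookup_sum coeff_smult)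

lemma support_smult: "support (smult q a) \<subseteq> support a"
  by (auto simp: in_keys_iff coeff_smult)

definition lin_ext :: "(elem \<Rightarrow> lam) \<Rightarrow> lam \<Rightarrow> lam" where
  "lin_ext f a = (\<Sum>c\<in>support a. smult (coeff a c) (f c))"

lemma lin_ext_superset:
  assumes "finite K" "support a \<subseteq> K"
  shows "lin_ext f a = (\<Sum>c\<in>K. smult (coeff a c) (f c))"
  unfolding lin_ext_def by (rule sum.mono_neutral_left) (use assms in \<open>auto simp: in_keys_iff\<close>)

lemma coeff_lin_ext: "coeff (lin_ext f a) k = (\<Sum>c\<in>support a. coeff a c * coeff (f c) k)"
  unfolding lin_ext_def by (simp add: lookup_sum coeff_smult)

lemma lin_ext_add: "lin_ext f (a + b) = lin_ext f a + lin_ext f b"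
proof -
  let ?K = "support a \<union> support b"
  have "lin_ext f (a + b) = (\<Sum>c\<in>?K. smult (coeff (a + b) c) (f c))"
    by (rule lin_ext_superset) (use keys_add[of a b] in auto)
  also have "\<dots> = (\<Sum>c\<in>?K. smult (coeff a c) (f c)) + (\<Sum>c\<in>?K. smult (coeff b c) (f c))"
    by (simp add: lookup_add smult_add_left sum.distrib)
  also have "\<dots> = lin_ext f a + lin_ext f b"
    by (subst (1 2) lin_ext_superset[of ?K]) auto
  finally show ?thesis .
qed

lemma lin_ext_smult: "lin_ext f (smult q a) = smult q (lin_ext f a)"
proof -
  have "lin_ext f (smult q a) = (\<Sum>c\<in>support a. smult (coeff (smult q a) c) (f c))"
    by (rule lin_ext_superset) (auto simp: support_smult)
  then show ?thesis by (simp add: lin_ext_def smult_sum coeff_smult smult_smult)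
qed

lemma lin_ext_zero [simp]: "lin_ext f 0 = 0"
  by (simp add: lin_ext_def)

lemma lin_ext_diff: "lin_ext f (a - b) = lin_ext f a - lin_ext f b"
  by (metis diff_conv_add_uminus lin_ext_add lin_ext_smult smult_minus_one)

lemma lin_ext_sum: "lin_ext f (sum g A) = (\<Sum>x\<in>A. lin_ext f (g x))"
  by (induction A rule: infinite_finite_induct) (auto simp: lin_ext_add)

lemma lin_ext_basis [simp]: "lin_ext f (basis c) = f c"
  unfolding lin_ext_def basis_def by simp

lemma lin_ext_cong: "(\<And>c. c \<in> support a \<Longrightarrow> f c = g c) \<Longrightarrow> lin_ext f a = lin_ext g a"
  unfolding lin_ext_def by simp

lemma lin_ext_fun_add: "lin_ext (\<lambda>c. f c + g c) a = lin_ext f a + lin_ext g a"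
  unfolding lin_ext_def by (simp add: smult_add_right sum.distrib)

lemma lin_ext_fun_diff: "lin_ext (\<lambda>c. f c - g c) a = lin_ext f a - lin_ext g a"
  unfolding lin_ext_def by (simp add: smult_diff_right sum_subtractf)

lemma lin_ext_fun_smult: "lin_ext (\<lambda>c. smult q (f c)) a = smult q (lin_ext f a)"
  unfolding lin_ext_def by (simp add: smult_sum smult_smult mult.commute)

lemma lin_ext_fun_sum: "lin_ext (\<lambda>c. \<Sum>i\<in>A. f i c) a = (\<Sum>i\<in>A. lin_ext (f i) a)"
  unfolding lin_ext_def by (simp add: smult_sum sum.swap[of _ A])

lemma lin_ext_basis_id: "lin_ext basis a = a"
proof (rule poly_mapping_eqI)
  fix k
  have "(\<Sum>c\<in>support a. coeff a c * (if c = k then 1 else 0)) = (\<Sum>c\<in>support a. if c = k then coeff a c else 0)"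
    by (rule sum.cong) auto
  also have "\<dots> = coeff a k" by (simp add: sum.delta in_keys_iff)
  finally show "coeff (lin_ext basis a) k = coeff a k" by (simp add: coeff_lin_ext coeff_basis)
qed

lemma lin_ext_lin_ext: "lin_ext g (lin_ext f a) = lin_ext (\<lambda>c. lin_ext g (f c)) a"
  by (simp add: lin_ext_def[of f] lin_ext_def[of "\<lambda>c. lin_ext g (f c)"] lin_ext_sum lin_ext_smult)

lemma lin_ext_swap:
  "lin_ext (\<lambda>c. lin_ext (\<lambda>d. F c d) b) a = lin_ext (\<lambda>d. lin_ext (\<lambda>c. F c d) a) b"
  unfolding lin_ext_def by (simp add: smult_sum smult_smult sum.swap[of _ "support a"] mult.commute)

section \<open>The pre-Lie product and the Jacobi identity\<close>

definition pre_lie_basis :: "elem \<Rightarrow> elem \<Rightarrow> lam" where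
  "pre_lie_basis c d = (\<Sum>s = 1..arity c. basis (comp c s d))"

lemma sum_triangle_swap:
  fixes h :: "nat \<Rightarrow> nat \<Rightarrow> 'a::comm_monoid_add"
  shows "(\<Sum>s\<in>{1..n}. \<Sum>u\<in>{1..<s}. h u (s - 1)) = (\<Sum>u\<in>{1..n}. \<Sum>v\<in>{u..<n}. h u v)"
proof (induction n)
  case (Suc n)
  have "(\<Sum>s\<in>{1..Suc n}. \<Sum>u\<in>{1..<s}. h u (s - 1))
      = (\<Sum>u\<in>{1..n}. \<Sum>v\<in>{u..<n}. h u v) + (\<Sum>u\<in>{1..n}. h u n)"
    using Suc by (simp add: atLeastLessThanSuc_atLeastAtMost)
  also have "\<dots> = (\<Sum>u\<in>{1..n}. \<Sum>v\<in>{u..<Suc n}. h u v)"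
    by (simp add: sum.distrib[symmetric])
  finally show ?case by simp
qed simp

lemma sum_split_blocks:
  fixes f :: "nat \<Rightarrow> 'a::comm_monoid_add"
  assumes "1 \<le> s" "s \<le> a"
  shows "(\<Sum>u\<in>{1..a + b - 1}. f u)
    = (\<Sum>u\<in>{1..<s}. f u) + (\<Sum>t\<in>{1..b}. f (s + t - 1)) + (\<Sum>v\<in>{s..<a}. f (v + b))"
proof -
  have "(\<Sum>u\<in>{1..a + b - 1}. f u) = (\<Sum>u\<in>{1..<s}. f u) + (\<Sum>u\<in>{s..<s + b}. f u) + (\<Sum>u\<in>{s + b..<a + b}. f u)"
    using assms by (simp add: atLeastLessThanSuc_atLeastAtMost[symmetric] sum.atLeastLessThan_concat add.assoc)
  also have "(\<Sum>u\<in>{s..<s + b}. f u) = (\<Sum>t\<in>{1..b}. f (s + t - 1))"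
    using assms sum.shift_bounds_nat_ivl[of f 1 "s - 1" "b + 1"]
    by (simp add: atLeastLessThanSuc_atLeastAtMost add.commute)
  also have "(\<Sum>u\<in>{s + b..<a + b}. f u) = (\<Sum>v\<in>{s..<a}. f (v + b))"
    by (rule sum.shift_bounds_nat_ivl)
  finally show ?thesis .
qed

lemma pre_lie_basis_comp:
  assumes "1 \<le> s" "s \<le> arity x"
  shows "pre_lie_basis (comp x s y) z =
    (\<Sum>u\<in>{1..<s}. basis (comp (comp x s y) u z))
    + (\<Sum>t\<in>{1..arity y}. basis (comp x s (comp y t z)))
    + (\<Sum>v\<in>{s..<arity x}. basis (comp (comp x s y) (v + arity y) z))"
proof -
  have "pre_lie_basis (comp x s y) z = (\<Sum>u\<in>{1..arity x + arity y - 1}. basis (comp (comp x s y) u z))"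
    unfolding pre_lie_basis_def using arity_comp[OF assms] by simp
  also have "\<dots> = (\<Sum>u\<in>{1..<s}. basis (comp (comp x s y) u z))
    + (\<Sum>t\<in>{1..arity y}. basis (comp (comp x s y) (s + t - 1) z))
    + (\<Sum>v\<in>{s..<arity x}. basis (comp (comp x s y) (v + arity y) z))"
    by (rule sum_split_blocks[OF assms])
  also have "(\<Sum>t\<in>{1..arity y}. basis (comp (comp x s y) (s + t - 1) z))
           = (\<Sum>t\<in>{1..arity y}. basis (comp x s (comp y t z)))"
    by (rule sum.cong) (use assms comp_comp_nested in auto)
  finally show ?thesis .
qed

text \<open>
  The associator of the pre-Lie product on basis elements splits into the terms where
  \<open>z\<close> is grafted onto \<open>x\<close> to the left of \<open>y\<close> and those where it is grafted to the right.
\<close>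

definition assoc_left :: "elem \<Rightarrow> elem \<Rightarrow> elem \<Rightarrow> lam" where
  "assoc_left x y z = (\<Sum>s\<in>{1..arity x}. \<Sum>u\<in>{1..<s}. basis (comp (comp x s y) u z))"

definition assoc_right :: "elem \<Rightarrow> elem \<Rightarrow> elem \<Rightarrow> lam" where
  "assoc_right x y z =
    (\<Sum>s\<in>{1..arity x}. \<Sum>v\<in>{s..<arity x}. basis (comp (comp x s y) (v + arity y) z))"

definition associator :: "elem \<Rightarrow> elem \<Rightarrow> elem \<Rightarrow> lam" where
  "associator x y z = (\<Sum>s\<in>{1..arity x}. pre_lie_basis (comp x s y) z)
     - (\<Sum>t\<in>{1..arity y}. pre_lie_basis x (comp y t z))"

lemma assoc_left_eq_assoc_right: "assoc_left x y z = assoc_right x z y"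
proof -
  have "assoc_left x y z
      = (\<Sum>s\<in>{1..arity x}. \<Sum>u\<in>{1..<s}. basis (comp (comp x u z) ((s - 1) + arity z) y))"
    unfolding assoc_left_def
  proof (intro sum.cong refl)
    fix s u assume "s \<in> {1..arity x}" "u \<in> {1..<s}"
    then show "basis (comp (comp x s y) u z) = basis (comp (comp x u z) ((s - 1) + arity z) y)"
      using comp_comp_parallel[of u s x y z] by (simp add: add.commute)
  qed
  also have "\<dots> = assoc_right x z y"
    unfolding assoc_right_def by (rule sum_triangle_swap)
  finally show ?thesis .
qed

lemma associator_eq: "associator x y z = assoc_left x y z + assoc_right x y z"
proof -
  have "(\<Sum>s\<in>{1..arity x}. pre_lie_basis (comp x s y) z)
      = assoc_left x y z + (\<Sum>s\<in>{1..arity x}. \<Sum>t\<in>{1..arity y}. basis (comp x s (comp y t z)))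
        + assoc_right x y z"
    by (simp add: pre_lie_basis_comp assoc_left_def assoc_right_def sum.distrib)
  also have "(\<Sum>s\<in>{1..arity x}. \<Sum>t\<in>{1..arity y}. basis (comp x s (comp y t z)))
      = (\<Sum>t\<in>{1..arity y}. pre_lie_basis x (comp y t z))"
    unfolding pre_lie_basis_def by (rule sum.swap)
  finally show ?thesis unfolding associator_def by simp
qed

lemma associator_commute: "associator x y z = associator x z y"
  using assoc_left_eq_assoc_right[of x y z] assoc_left_eq_assoc_right[of x z y]
  by (simp add: associator_eq add.commute)

definition pre_lie :: "lam \<Rightarrow> lam \<Rightarrow> lam" where
  "pre_lie a b = lin_ext (\<lambda>c. lin_ext (\<lambda>d. pre_lie_basis c d) b) a"

definition trilin_ext :: "(elem \<Rightarrow> elem \<Rightarrow> elem \<Rightarrow> lam) \<Rightarrow> lam \<Rightarrow> lam \<Rightarrow> lam \<Rightarrow> lam" where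
  "trilin_ext F a b c = lin_ext (\<lambda>x. lin_ext (\<lambda>y. lin_ext (\<lambda>z. F x y z) c) b) a"

lemma trilin_ext_diff:
  "trilin_ext F a b c - trilin_ext G a b c = trilin_ext (\<lambda>x y z. F x y z - G x y z) a b c"
  unfolding trilin_ext_def by (simp add: lin_ext_fun_diff)

lemma lin_ext_pre_lie_basis: "lin_ext G (pre_lie_basis x y) = (\<Sum>s\<in>{1..arity x}. G (comp x s y))"
  unfolding pre_lie_basis_def by (simp add: lin_ext_sum)

lemma pre_lie_associator:
  "pre_lie (pre_lie a b) c - pre_lie a (pre_lie b c) = trilin_ext associator a b c"
proof -
  have "pre_lie (pre_lie a b) c
      = trilin_ext (\<lambda>x y z. \<Sum>s\<in>{1..arity x}. pre_lie_basis (comp x s y) z) a b c"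
    unfolding pre_lie_def[of "pre_lie a b"] unfolding pre_lie_def trilin_ext_def
    by (simp add: lin_ext_lin_ext lin_ext_pre_lie_basis lin_ext_fun_sum)
  moreover have "pre_lie a (pre_lie b c)
      = trilin_ext (\<lambda>x y z. \<Sum>t\<in>{1..arity y}. pre_lie_basis x (comp y t z)) a b c"
    unfolding pre_lie_def trilin_ext_def by (simp add: lin_ext_lin_ext lin_ext_pre_lie_basis)
  ultimately show ?thesis by (simp only: trilin_ext_diff associator_def[abs_def])
qed

lemma pre_lie_identity:
  "pre_lie (pre_lie a b) c - pre_lie a (pre_lie b c) = pre_lie (pre_lie a c) b - pre_lie a (pre_lie c b)"
proof -
  have "(\<lambda>x z y. associator x y z) = associator"
    by (intro ext) (rule associator_commute)
  moreover have "trilin_ext associator a b c = trilin_ext (\<lambda>x z y. associator x y z) a c b"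
    unfolding trilin_ext_def by (subst lin_ext_swap) (rule refl)
  ultimately show ?thesis by (simp add: pre_lie_associator)
qed

lemma bracket_eq_lin_ext: "bracket a b = lin_ext (\<lambda>c. lin_ext (\<lambda>d. br_basis c d) b) a"
proof -
  have "bracket a b = (\<Sum>c\<in>support a. \<Sum>d\<in>support b. smult (coeff a c * coeff b d) (br_basis c d))"
    unfolding bracket_def smult_def by simp
  then show ?thesis unfolding lin_ext_def by (simp add: smult_sum smult_smult)
qed

lemma br_basis_eq_pre_lie_basis: "br_basis c d = pre_lie_basis d c - pre_lie_basis c d"
  unfolding br_basis_def pre_lie_basis_def by simp

lemma bracket_eq_pre_lie: "bracket a b = pre_lie b a - pre_lie a b"
proof -
  have "bracket a b = lin_ext (\<lambda>c. lin_ext (\<lambda>d. pre_lie_basis d c) b) a - pre_lie a b"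
    unfolding bracket_eq_lin_ext br_basis_eq_pre_lie_basis pre_lie_def by (simp add: lin_ext_fun_diff)
  then show ?thesis unfolding pre_lie_def by (subst lin_ext_swap)
qed

lemma pre_lie_diff_left: "pre_lie (a - a') b = pre_lie a b - pre_lie a' b"
  unfolding pre_lie_def by (rule lin_ext_diff)

lemma pre_lie_diff_right: "pre_lie a (b - b') = pre_lie a b - pre_lie a b'"
  unfolding pre_lie_def by (simp add: lin_ext_diff lin_ext_fun_diff)

lemma jacobi: "bracket a (bracket b c) = bracket (bracket a b) c + bracket b (bracket a c)"
proof -
  define D where "D x y z = (pre_lie (pre_lie x y) z - pre_lie x (pre_lie y z))
    - (pre_lie (pre_lie x z) y - pre_lie x (pre_lie z y))" for x y z
  have "D x y z = 0" for x y z
    unfolding D_def by (simp add: pre_lie_identity)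
  moreover have "bracket a (bracket b c) - (bracket (bracket a b) c + bracket b (bracket a c))
      = D b a c - D a b c - D c a b"
    unfolding D_def bracket_eq_pre_lie pre_lie_diff_left pre_lie_diff_right by (simp add: algebra_simps)
  ultimately show ?thesis by simp
qed

lemma bracket_basis_left: "bracket (basis c) b = lin_ext (br_basis c) b"
  unfolding bracket_eq_lin_ext by simp

lemma bracket_add_left: "bracket (a + a') b = bracket a b + bracket a' b"
  unfolding bracket_eq_lin_ext by (rule lin_ext_add)

lemma bracket_add_right: "bracket a (b + b') = bracket a b + bracket a b'"
  unfolding bracket_eq_lin_ext by (simp add: lin_ext_add lin_ext_fun_add)

lemma bracket_smult_left: "bracket (smult q a) b = smult q (bracket a b)"
  unfolding bracket_eq_lin_ext by (rule lin_ext_smult)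

lemma bracket_smult_right: "bracket a (smult q b) = smult q (bracket a b)"
  unfolding bracket_eq_lin_ext by (simp add: lin_ext_smult lin_ext_fun_smult)

lemma bracket_sum_left: "bracket (sum f A) b = (\<Sum>i\<in>A. bracket (f i) b)"
  by (induction A rule: infinite_finite_induct) (auto simp: bracket_add_left bracket_eq_lin_ext[of 0])

definition homogeneous :: "nat \<Rightarrow> lam \<Rightarrow> bool" where
  "homogeneous n a \<longleftrightarrow> (\<forall>k\<in>support a. arity k = n)"

lemma homogeneous_basis: "homogeneous (arity c) (basis c)"
  unfolding homogeneous_def basis_def by simp

lemma homogeneous_zero [simp]: "homogeneous n 0"
  unfolding homogeneous_def by simp

lemma homogeneous_add: "homogeneous n a \<Longrightarrow> homogeneous n b \<Longrightarrow> homogeneous n (a + b)"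
  unfolding homogeneous_def using keys_add[of a b] by blast

lemma homogeneous_smult: "homogeneous n a \<Longrightarrow> homogeneous n (smult q a)"
  unfolding homogeneous_def using support_smult by blast

lemma homogeneous_diff: "homogeneous n a \<Longrightarrow> homogeneous n b \<Longrightarrow> homogeneous n (a - b)"
  by (metis diff_conv_add_uminus homogeneous_add homogeneous_smult smult_minus_one)

lemma homogeneous_sum: "(\<And>i. i \<in> A \<Longrightarrow> homogeneous n (f i)) \<Longrightarrow> homogeneous n (sum f A)"
  by (induction A rule: infinite_finite_induct) (auto intro: homogeneous_add)

lemma homogeneous_lin_ext:
  "(\<And>c. c \<in> support a \<Longrightarrow> homogeneous n (f c)) \<Longrightarrow> homogeneous n (lin_ext f a)"
  unfolding lin_ext_def by (intro homogeneous_sum homogeneous_smult) auto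

lemma coeff_homogeneous: "homogeneous n a \<Longrightarrow> arity k \<noteq> n \<Longrightarrow> coeff a k = 0"
  unfolding homogeneous_def by (auto simp: in_keys_iff)

lemma homogeneous_pre_lie_basis: "homogeneous (arity c + arity d - 1) (pre_lie_basis c d)"
  unfolding pre_lie_basis_def
  by (intro homogeneous_sum) (metis arity_comp atLeastAtMost_iff homogeneous_basis)

lemma homogeneous_bracket:
  "homogeneous m a \<Longrightarrow> homogeneous n b \<Longrightarrow> homogeneous (m + n - 1) (bracket a b)"
  unfolding bracket_eq_lin_ext br_basis_eq_pre_lie_basis
  by (intro homogeneous_lin_ext homogeneous_diff)
    (metis add.commute homogeneous_def homogeneous_pre_lie_basis)+

lemma bracket_Leaf_homogeneous:
  assumes "homogeneous n a"
  shows "bracket (basis (T Leaf)) a = smult (of_nat n - 1) a"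
proof -
  have "br_basis (T Leaf) d = smult (of_nat (arity d) - 1) (basis d)" for d
  proof -
    have "pre_lie_basis d (T Leaf) = (\<Sum>s\<in>{1..arity d}. basis d)"
      unfolding pre_lie_basis_def by (intro sum.cong) (cases d; simp add: graft_Leaf_right)+
    moreover have "pre_lie_basis (T Leaf) d = basis d"
      by (cases d) (simp_all add: pre_lie_basis_def)
    ultimately show ?thesis
      by (simp add: br_basis_eq_pre_lie_basis sum_const_smult smult_diff_left)
  qed
  then have "bracket (basis (T Leaf)) a = lin_ext (\<lambda>d. smult (of_nat n - 1) (basis d)) a"
    unfolding bracket_basis_left using assms by (intro lin_ext_cong) (simp add: homogeneous_def)
  then show ?thesis by (simp add: lin_ext_fun_smult lin_ext_basis_id)
qed

lemma bracket_Circ_basis: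
  "bracket (basis Circ) (basis c) = (\<Sum>t\<in>{1..arity c}. basis (comp c t Circ))"
  by (simp add: bracket_basis_left br_basis_eq_pre_lie_basis pre_lie_basis_def)

section \<open>The span of right-normed words\<close>

inductive word :: "nat \<Rightarrow> nat \<Rightarrow> lam \<Rightarrow> bool" for N :: nat where
  basis: "arity c \<le> Suc N \<Longrightarrow> word N (arity c) (basis c)"
| tree_bracket: "word N n w \<Longrightarrow> 2 \<le> leaves t \<Longrightarrow> leaves t \<le> Suc N \<Longrightarrow>
    word N (leaves t + n - 1) (bracket (basis (T t)) w)"

inductive_set word_span :: "nat \<Rightarrow> lam set" for N :: nat where
  zero: "0 \<in> word_span N"
| word: "word N n w \<Longrightarrow> w \<in> word_span N"
| add: "a \<in> word_span N \<Longrightarrow> b \<in> word_span N \<Longrightarrow> a + b \<in> word_span N"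
| smult: "a \<in> word_span N \<Longrightarrow> smult q a \<in> word_span N"

lemma word_span_diff: "a \<in> word_span N \<Longrightarrow> b \<in> word_span N \<Longrightarrow> a - b \<in> word_span N"
  by (metis word_span.add word_span.smult diff_conv_add_uminus smult_minus_one)

lemma word_span_sum: "(\<And>i. i \<in> A \<Longrightarrow> f i \<in> word_span N) \<Longrightarrow> sum f A \<in> word_span N"
  by (induction A rule: infinite_finite_induct) (auto intro: word_span.intros)

lemma word_span_linear_induct [consumes 1, case_names word]:
  assumes "a \<in> word_span N"
    and "\<And>n w. word N n w \<Longrightarrow> f w \<in> word_span N"
    and "\<And>a b. f (a + b) = f a + f b" and "\<And>q a. f (smult q a) = smult q (f a)"
  shows "f a \<in> word_span N"
  using assms(1)
proof (induction rule: word_span.induct)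
  case zero
  have "f 0 = smult 0 (f 0)" using assms(4)[of 0 0] by simp
  then show ?case by (simp add: word_span.zero)
qed (simp_all add: assms(2-4) word_span.add word_span.smult)

lemma homogeneous_word: "word N n w \<Longrightarrow> homogeneous n w"
proof (induction rule: word.induct)
  case (tree_bracket n w t)
  then show ?case using homogeneous_bracket[OF homogeneous_basis[of "T t"]] by simp
qed (rule homogeneous_basis)

lemma word_span_bracket_tree:
  assumes "2 \<le> leaves t" "leaves t \<le> Suc N" "a \<in> word_span N"
  shows "bracket (basis (T t)) a \<in> word_span N"
  using assms(3)
proof (induction rule: word_span_linear_induct)
  case (word n w)
  then show ?case using assms by (blast intro: word_span.word word.tree_bracket)
qed (simp_all add: bracket_add_right bracket_smult_right)

lemma word_span_bracket_Leaf:
  assumes "a \<in> word_span N"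
  shows "bracket (basis (T Leaf)) a \<in> word_span N"
  using assms
proof (induction rule: word_span_linear_induct)
  case (word n w)
  then show ?case
    using bracket_Leaf_homogeneous[OF homogeneous_word] by (auto intro: word_span.intros)
qed (simp_all add: bracket_add_right bracket_smult_right)

lemma word_span_bracket_small_tree:
  assumes "leaves t \<le> Suc N" "a \<in> word_span N"
  shows "bracket (basis (T t)) a \<in> word_span N"
proof (cases "t = Leaf")
  case False
  then show ?thesis using assms by (intro word_span_bracket_tree) (simp_all add: leaves_ge_2_iff)
qed (simp add: assms word_span_bracket_Leaf)

text \<open>Moving \<open>Circ\<close> past a tree by the Jacobi identity leaves a sum of faces of that tree.\<close>

lemma word_bracket_Circ: "word N n w \<Longrightarrow> bracket (basis Circ) w \<in> word_span N"
proof (induction rule: word.induct)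
  case (basis c)
  show ?case unfolding bracket_Circ_basis
  proof (intro word_span_sum)
    fix t assume "t \<in> {1..arity c}"
    then have "arity (comp c t Circ) \<le> Suc N" using arity_comp[of t c Circ] basis by simp
    then show "basis (comp c t Circ) \<in> word_span N" by (blast intro: word_span.word word.basis)
  qed
next
  case (tree_bracket n w t)
  have t: "t \<noteq> Leaf" using tree_bracket by auto
  have w: "w \<in> word_span N" using tree_bracket by (blast intro: word_span.word)
  have "bracket (bracket (basis Circ) (basis (T t))) w
      = (\<Sum>i\<in>{1..leaves t}. bracket (basis (T (face i t))) w)"
    unfolding bracket_Circ_basis bracket_sum_left using t by simp
  also have "\<dots> \<in> word_span N"
    using t tree_bracket.hyps by (intro word_span_sum word_span_bracket_small_tree w) (simp add: leaves_face)
  finally have "bracket (bracket (basis Circ) (basis (T t))) w \<in> word_span N" .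
  moreover have "bracket (basis (T t)) (bracket (basis Circ) w) \<in> word_span N"
    using tree_bracket by (intro word_span_bracket_tree) auto
  ultimately show ?case
    by (simp add: jacobi[of "basis Circ" "basis (T t)" w] word_span.add)
qed

lemma word_span_bracket_basis:
  assumes "arity c \<le> Suc N" "a \<in> word_span N"
  shows "bracket (basis c) a \<in> word_span N"
proof (cases c)
  case Circ
  from assms(2) show ?thesis
  proof (induction rule: word_span_linear_induct)
    case (word n w)
    then show ?case using Circ word_bracket_Circ by simp
  qed (simp_all add: bracket_add_right bracket_smult_right)
next
  case (T t)
  then show ?thesis using assms by (simp add: word_span_bracket_small_tree)
qed

lemma word_bracket_word_span: "word N n w \<Longrightarrow> a \<in> word_span N \<Longrightarrow> bracket w a \<in> word_span N"
proof (induction arbitrary: a rule: word.induct)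
  case (basis c)
  then show ?case by (rule word_span_bracket_basis)
next
  case (tree_bracket n w t)
  let ?t = "basis (T t)"
  have "bracket ?t (bracket w a) \<in> word_span N" "bracket w (bracket ?t a) \<in> word_span N"
    using tree_bracket by (auto intro: word_span_bracket_tree)
  moreover have "bracket (bracket ?t w) a = bracket ?t (bracket w a) - bracket w (bracket ?t a)"
    using jacobi[of ?t w a] by (simp add: algebra_simps)
  ultimately show ?case by (simp add: word_span_diff)
qed

lemma word_span_bracket:
  assumes "a \<in> word_span N" "b \<in> word_span N"
  shows "bracket a b \<in> word_span N"
  using assms(1) by (rule word_span_linear_induct[where f = "\<lambda>a. bracket a b"])
    (simp_all add: word_bracket_word_span assms(2) bracket_add_left bracket_smult_left)

lemma lie_gen_subset_word_span: "S \<subseteq> word_span N \<Longrightarrow> lie_gen S \<subseteq> word_span N"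
proof
  fix a assume S: "S \<subseteq> word_span N" and "a \<in> lie_gen S"
  from \<open>a \<in> lie_gen S\<close> show "a \<in> word_span N"
    by (induction rule: lie_gen.induct) (use S in \<open>auto intro: word_span.intros word_span_bracket\<close>)
qed

lemma finite_subset_word_span:
  assumes "finite S"
  obtains N where "S \<subseteq> word_span N"
proof
  define N where "N = Max (insert 0 (arity ` (\<Union>a\<in>S. support a)))"
  have "finite (insert 0 (arity ` (\<Union>a\<in>S. support a)))" using assms by simp
  then have small: "arity c \<le> N" if "c \<in> support a" "a \<in> S" for a c
    unfolding N_def using that by (intro Max_ge) auto
  show "S \<subseteq> word_span N"
  proof
    fix a assume "a \<in> S"
    have "basis c \<in> word_span N" if "c \<in> support a" for c
      using small[OF that \<open>a \<in> S\<close>] by (intro word_span.word[of N "arity c"] word.basis) simp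
    then have "lin_ext basis a \<in> word_span N"
      unfolding lin_ext_def by (intro word_span_sum word_span.smult)
    then show "a \<in> word_span N" by (simp add: lin_ext_basis_id)
  qed
qed

section \<open>Left combs\<close>

fun left_comb :: "nat \<Rightarrow> btree" where
  "left_comb 0 = Leaf"
| "left_comb (Suc k) = Node (left_comb k) Leaf"

lemma leaves_left_comb: "leaves (left_comb k) = Suc k"
  by (induction k) auto

lemma graft_neq_left_comb:
  "2 \<le> i \<Longrightarrow> i \<le> leaves a \<Longrightarrow> b \<noteq> Leaf \<Longrightarrow> graft a i b \<noteq> left_comb M"
proof (induction a arbitrary: i M)
  case (Node l r)
  show ?case
  proof (cases "i \<le> leaves l")
    case True
    then show ?thesis using Node by (cases M) auto
  next
    case False
    then show ?thesis using Node.prems by (cases M) (auto simp: graft_eq_Leaf_iff)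
  qed
qed simp

lemma graft_1_eq_left_comb_iff:
  "graft a 1 b = left_comb M \<longleftrightarrow> (\<exists>p q. a = left_comb p \<and> b = left_comb q \<and> M = p + q)"
proof
  show "graft a 1 b = left_comb M \<Longrightarrow> \<exists>p q. a = left_comb p \<and> b = left_comb q \<and> M = p + q"
  proof (induction a arbitrary: M)
    case Leaf
    then show ?case by (intro exI[of _ 0] exI[of _ M]) simp
  next
    case (Node l r)
    then obtain M' where M: "M = Suc M'" "graft l 1 b = left_comb M'" "r = Leaf"
      using leaves_ge_1[of l] by (cases M) auto
    then obtain p q where "l = left_comb p" "b = left_comb q" "M' = p + q" using Node.IH by blast
    then show ?case using M by (intro exI[of _ "Suc p"] exI[of _ q]) simp
  qed
next
  have "graft (left_comb p) 1 (left_comb q) = left_comb (p + q)" for p q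
    by (induction p) (auto simp: leaves_left_comb)
  then show "\<exists>p q. a = left_comb p \<and> b = left_comb q \<and> M = p + q \<Longrightarrow> graft a 1 b = left_comb M"
    by auto
qed

lemma graft_1_eq_left_comb_commute: "graft a 1 b = left_comb M \<longleftrightarrow> graft b 1 a = left_comb M"
  unfolding graft_1_eq_left_comb_iff by (metis add.commute)

lemma coeff_pre_lie_basis_left_comb:
  assumes "b \<noteq> Leaf"
  shows "coeff (pre_lie_basis (T a) (T b)) (T (left_comb M)) = (if graft a 1 b = left_comb M then 1 else 0)"
proof -
  have "coeff (pre_lie_basis (T a) (T b)) (T (left_comb M))
      = (\<Sum>s\<in>{1..leaves a}. if graft a s b = left_comb M then 1 else 0)"
    unfolding pre_lie_basis_def by (simp add: lookup_sum coeff_basis)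
  also have "{1..leaves a} = insert 1 {2..leaves a}" using leaves_ge_1[of a] by auto
  also have "(\<Sum>s\<in>insert 1 {2..leaves a}. if graft a s b = left_comb M then 1 else (0::rat))
      = (if graft a 1 b = left_comb M then 1 else 0)"
    using graft_neq_left_comb[OF _ _ assms] by (simp add: sum.neutral)
  finally show ?thesis .
qed

lemma coeff_br_basis_left_comb:
  "t \<noteq> Leaf \<Longrightarrow> d \<noteq> Leaf \<Longrightarrow> coeff (br_basis (T t) (T d)) (T (left_comb M)) = 0"
  using graft_1_eq_left_comb_commute[of d t M]
  by (simp add: br_basis_eq_pre_lie_basis lookup_minus coeff_pre_lie_basis_left_comb)

lemma coeff_left_comb_word: "word N n w \<Longrightarrow> coeff w (T (left_comb (Suc N))) = 0"
proof (induction rule: word.induct)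
  case (basis c)
  then show ?case by (auto simp: coeff_basis leaves_left_comb)
next
  case (tree_bracket n w t)
  let ?comb = "T (left_comb (Suc N))"
  show ?case
  proof (cases "leaves t + n - 1 = Suc (Suc N)")
    case False
    then show ?thesis
      using tree_bracket homogeneous_word[OF word.tree_bracket]
      by (intro coeff_homogeneous) (auto simp: leaves_left_comb)
  next
    case True
    have "coeff (br_basis (T t) d) ?comb = 0" if "d \<in> support w" for d
    proof -
      have "arity d = n" using that homogeneous_word[OF tree_bracket.hyps(1)] by (simp add: homogeneous_def)
      then obtain u where "d = T u" "u \<noteq> Leaf"
        using True tree_bracket.hyps by (cases d) (auto simp: leaves_ge_2_iff[symmetric])
      moreover have "t \<noteq> Leaf" using tree_bracket.hyps by auto
      ultimately show ?thesis using coeff_br_basis_left_comb[of t u "Suc N"] by simp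
    qed
    then show ?thesis by (simp add: bracket_basis_left coeff_lin_ext)
  qed
qed

lemma coeff_left_comb_word_span: "a \<in> word_span N \<Longrightarrow> coeff a (T (left_comb (Suc N))) = 0"
proof (induction rule: word_span.induct)
  case (word n w)
  then show ?case by (rule coeff_left_comb_word)
qed (simp_all add: lookup_add coeff_smult)

theorem theorem5p1:
  shows "\<not> finitely_generated_lie"
proof
  assume "finitely_generated_lie"
  then obtain S where "finite S" and S: "lie_gen S = UNIV"
    unfolding finitely_generated_lie_def by blast
  obtain N where "S \<subseteq> word_span N" using \<open>finite S\<close> by (rule finite_subset_word_span)
  then have "basis (T (left_comb (Suc N))) \<in> word_span N"
    using lie_gen_subset_word_span S by blast
  then show False using coeff_left_comb_word_span by (fastforce simp: coeff_basis)
qed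

end
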